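(* Let $E,F\subseteq\mathbb{R}$ be Lebesgue-measurable and let $m:E\to F$ be a bijection which is strictly increasing and measure-preserving (with respect to Lebesgue measure). Then $m^{-1}$ is also strictly increasing and measure-preserving; that is, $m\in\mathbb{MO}(E,F)$.
   Context: A map $m:E\to F$ is measure-preserving if for every Lebesgue-measurable $A\subseteq F$, $m^{-1}(A)$ is Lebesgue-measurable and $\lambda(m^{-1}(A))=\lambda(A)$. $\mathbb{MO}(E,F)$ is the set of strictly increasing bijections $m:E\to F$ such that both $m$ and $m^{-1}$ are measure-preserving. *)

theory Defs
  imports "HOL-Analysis.Analysis"
begin

text \<open>A map m : E -> F (represented as a total function real => real whose
behaviour outside E is irrelevant) is measure-preserving if for every
Lebesgue-measurable A \<subseteq> F, the preimage m^{-1}(A) = {x \<in> E. m x \<in> A}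
is Lebesgue-measurable and has the same (possibly infinite) Lebesgue measure as A.\<close>
definition measure_preserving :: "(real \<Rightarrow> real) \<Rightarrow> real set \<Rightarrow> real set \<Rightarrow> bool" where
  "measure_preserving m E F \<longleftrightarrow>
     (\<forall>A. A \<in> sets lebesgue \<and> A \<subseteq> F \<longrightarrow>
        (m -` A \<inter> E) \<in> sets lebesgue \<and>
        emeasure lebesgue (m -` A \<inter> E) = emeasure lebesgue A)"

definition MO :: "real set \<Rightarrow> real set \<Rightarrow> (real \<Rightarrow> real) set" where
  "MO E F = {m. bij_betw m E F \<and> strict_mono_on E m \<and>
                measure_preserving m E F \<and> measure_preserving (inv_into E m) F E}"

end

theory Submission
  imports Defs
begin

text \<open>The inverse of a strictly increasing bijection is strictly increasing, hence
Borel measurable on the Lebesgue-measurable set F, so it pulls Borel sets back to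
Lebesgue sets. A Lebesgue set differs from a Borel set by a subset of a Borel null
set N; the pull-back of N under the inverse is Lebesgue-measurable and is carried
by m back onto a subset of N, so by measure preservation of m it is null itself.
Thus the inverse pulls Lebesgue sets back to Lebesgue sets, and measure preservation
of the inverse follows from that of m because the two pull-backs undo each other.\<close>

lemma strict_mono_on_inv_into:
  fixes m :: "'a::linorder \<Rightarrow> 'b::linorder"
  assumes "bij_betw m E F" and "strict_mono_on E m"
  shows "strict_mono_on F (inv_into E m)"
proof (rule strict_mono_onI)
  fix r s assume rs: "r \<in> F" "s \<in> F" "r < s"
  have inE: "inv_into E m r \<in> E" "inv_into E m s \<in> E"
    using assms(1) rs by (auto simp: bij_betw_def inv_into_into)
  have m_inv: "m (inv_into E m r) = r" "m (inv_into E m s) = s"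
    using assms(1) rs by (auto simp: bij_betw_def f_inv_into_f)
  show "inv_into E m r < inv_into E m s"
  proof (rule ccontr)
    assume "\<not> inv_into E m r < inv_into E m s"
    then have "m (inv_into E m s) \<le> m (inv_into E m r)"
      using strict_mono_on_leD[OF assms(2)] inE by (simp add: not_less)
    with m_inv rs(3) show False by simp
  qed
qed

lemma vimage_inv_into_vimage:
  assumes "bij_betw m E F"
  shows "m -` (inv_into E m -` B \<inter> F) \<inter> E = B \<inter> E"
  using assms by (auto simp: bij_betw_def inv_into_into inj_on_eq_iff)

lemma mono_on_vimage_borel_in_lebesgue:
  fixes g :: "real \<Rightarrow> real"
  assumes "mono_on F g" and "F \<in> sets lebesgue" and "S \<in> sets borel"
  shows "g -` S \<inter> F \<in> sets lebesgue"
proof -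
  have "g -` S \<inter> space (restrict_space borel F) \<in> sets (restrict_space borel F)"
    using borel_measurable_mono_on_fnc[OF assms(1)] assms(3) by (rule measurable_sets)
  then obtain T where "T \<in> sets borel" "g -` S \<inter> F = F \<inter> T"
    by (auto simp: sets_restrict_space space_restrict_space)
  then show ?thesis using assms(2) by auto
qed

lemma measure_preserving_null_vimage:
  assumes "measure_preserving m E F" and "A \<in> sets lebesgue" and "A \<subseteq> F"
    and "m -` A \<inter> E \<in> null_sets lebesgue"
  shows "A \<in> null_sets lebesgue"
  using assms unfolding measure_preserving_def null_sets_def by auto

lemma measure_preserving_inv_into_vimage_lebesgue:
  fixes m :: "real \<Rightarrow> real"
  assumes F: "F \<in> sets lebesgue" and bij: "bij_betw m E F"
    and mono: "mono_on F (inv_into E m)" and mp: "measure_preserving m E F"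
    and B: "B \<in> sets lebesgue"
  shows "inv_into E m -` B \<inter> F \<in> sets lebesgue"
proof -
  let ?g = "inv_into E m"
  obtain S N N' where B_eq: "B = S \<union> N" and "N \<subseteq> N'"
    and N': "N' \<in> null_sets lborel" and S: "S \<in> sets lborel"
    using B sets_completionE by blast
  have N'_borel: "N' \<in> sets borel" using N' by (auto simp: null_sets_def)
  have "m -` (?g -` N' \<inter> F) \<inter> E \<in> null_sets lebesgue"
    unfolding vimage_inv_into_vimage[OF bij]
    by (rule null_sets_completion_subset[OF _ null_sets_completionI[OF N']]) blast
  then have "?g -` N' \<inter> F \<in> null_sets lebesgue"
    using measure_preserving_null_vimage[OF mp]
      mono_on_vimage_borel_in_lebesgue[OF mono F N'_borel] by blast
  then have "?g -` N \<inter> F \<in> null_sets lebesgue"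
    by (rule null_sets_completion_subset[rotated]) (use \<open>N \<subseteq> N'\<close> in blast)
  moreover have "?g -` S \<inter> F \<in> sets lebesgue"
    using mono_on_vimage_borel_in_lebesgue[OF mono F] S by simp
  moreover have "?g -` B \<inter> F = (?g -` S \<inter> F) \<union> (?g -` N \<inter> F)"
    using B_eq by blast
  ultimately show ?thesis by (auto simp: null_sets_def)
qed

lemma measure_preserving_inv_into:
  fixes m :: "real \<Rightarrow> real"
  assumes F: "F \<in> sets lebesgue" and bij: "bij_betw m E F"
    and mono: "mono_on F (inv_into E m)" and mp: "measure_preserving m E F"
  shows "measure_preserving (inv_into E m) F E"
  unfolding measure_preserving_def
proof (intro allI impI, elim conjE)
  fix B assume B: "B \<in> sets lebesgue" "B \<subseteq> E"
  let ?A = "inv_into E m -` B \<inter> F"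
  have A: "?A \<in> sets lebesgue"
    using measure_preserving_inv_into_vimage_lebesgue[OF F bij mono mp B(1)] .
  have "m -` ?A \<inter> E = B"
    using vimage_inv_into_vimage[OF bij, of B] B(2) by (simp add: Int_absorb2)
  moreover have "emeasure lebesgue (m -` ?A \<inter> E) = emeasure lebesgue ?A"
    using mp A unfolding measure_preserving_def by blast
  ultimately have "emeasure lebesgue ?A = emeasure lebesgue B" by simp
  with A show "?A \<in> sets lebesgue \<and> emeasure lebesgue ?A = emeasure lebesgue B" ..
qed

theorem mainTheorem12:
  fixes m :: "real \<Rightarrow> real" and E F :: "real set"
  assumes "E \<in> sets lebesgue" and "F \<in> sets lebesgue"
    and "bij_betw m E F" and "strict_mono_on E m"
    and "measure_preserving m E F"
  shows "strict_mono_on F (inv_into E m) \<and> measure_preserving (inv_into E m) F E \<and> m \<in> MO E F"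
proof -
  have inv_strict: "strict_mono_on F (inv_into E m)"
    using strict_mono_on_inv_into[OF assms(3,4)] .
  have inv_mp: "measure_preserving (inv_into E m) F E"
    using measure_preserving_inv_into[OF assms(2,3) strict_mono_on_imp_mono_on[OF inv_strict] assms(5)] .
  show ?thesis
    using inv_strict inv_mp assms(3-5) unfolding MO_def by simp
qed

end
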